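(* Let $\alpha\in(0,1)$ and $R>0$. A target moves in the plane with position $(0,y_T(t))$, $\dot y_T=1$, and an observer moves with position $(x_O(t),y_O(t))$, $\dot x_O=\alpha\cos\psi(t)$, $\dot y_O=\alpha\sin\psi(t)$, where the heading $\psi$ is a measurable control. Suppose that at time $t_2$ the target lies on the boundary of the observer's observation disk of radius $R$, with relative bearing $\lambda=\lambda_{TO,2}\in[-\pi,\pi]$, i.e. $\big(x_O(t_2),\,y_O(t_2)-y_T(t_2)\big)=R(\sin\lambda,\cos\lambda)$. Then the heading which maximizes the observation time $t_f-t_2$ (Phase-II) is the constant heading $$\psi_{O,2}^*=\cos^{-1}\!\left(\frac{(\alpha^2-1)\sin\lambda}{\alpha^2+2\alpha\cos\lambda+1}\right).$$
   Context: The target is observed when $\sqrt{x_O^2+(y_O-y_T)^2}\le R$. For a control $\psi$ on $[t_2,\infty)$, the escape time is $t_f=\inf\{t\ge t_2:\ x_O(t)^2+(y_O(t)-y_T(t))^2>R^2\}$, and the observation time is $t_f-t_2$. $\alpha=v_O/v_T$ is the speed ratio of observer to target (target speed normalized to $1$). Headings are measured counterclockwise from the positive $x$-axis. *)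

theory Defs
  imports "HOL-Analysis.Analysis"
begin

definition target_y :: "real \<Rightarrow> real \<Rightarrow> real \<Rightarrow> real" where
  "target_y t2 yT2 t = yT2 + (t - t2)"

text \<open>Observer position (Caratheodory solution of x_O' = alpha cos psi, y_O' = alpha sin psi),
  starting from (x2, yO2) at time t2.\<close>
definition obs_x :: "real \<Rightarrow> real \<Rightarrow> real \<Rightarrow> (real \<Rightarrow> real) \<Rightarrow> real \<Rightarrow> real" where
  "obs_x \<alpha> t2 x2 \<psi> t = x2 + integral {t2..t} (\<lambda>s. \<alpha> * cos (\<psi> s))"

definition obs_y :: "real \<Rightarrow> real \<Rightarrow> real \<Rightarrow> (real \<Rightarrow> real) \<Rightarrow> real \<Rightarrow> real" where
  "obs_y \<alpha> t2 yO2 \<psi> t = yO2 + integral {t2..t} (\<lambda>s. \<alpha> * sin (\<psi> s))"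

definition escape_time ::
  "real \<Rightarrow> real \<Rightarrow> real \<Rightarrow> real \<Rightarrow> real \<Rightarrow> real \<Rightarrow> (real \<Rightarrow> real) \<Rightarrow> real" where
  "escape_time \<alpha> R t2 x2 yO2 yT2 \<psi> =
     Inf {t. t2 \<le> t \<and>
        (obs_x \<alpha> t2 x2 \<psi> t)\<^sup>2 + (obs_y \<alpha> t2 yO2 \<psi> t - target_y t2 yT2 t)\<^sup>2 > R\<^sup>2}"

end

theory Submission
  imports Defs
begin

text \<open>Relative to the target, the observer starts on the circle of radius R at
  p = R (sin lam, cos lam) and moves with velocity \<alpha> e^(i\<psi>) - i. After time \<tau> its relative
  position differs from p - i\<tau> by a vector of length at most \<alpha>\<tau>, so being inside the disk
  forces |p - i\<tau>| \<le> R + \<alpha>\<tau>, i.e. \<tau> (1 - \<alpha>^2) \<le> 2 R (\<alpha> + cos lam): no control observes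
  longer than T = max 0 (2 R (\<alpha> + cos lam) / (1 - \<alpha>^2)). The optimal constant heading points
  from p - iT straight towards the origin, which makes this bound an equality, so the relative
  position is back on the circle at time T; in between it moves along a segment and stays in the
  (convex) disk.\<close>

lemma measurable_cis_comp:
  fixes \<psi> :: "real \<Rightarrow> real" and c :: complex
  assumes "\<psi> \<in> borel_measurable (lebesgue_on {a..})"
  shows "(\<lambda>s. c * cis (\<psi> s)) \<in> borel_measurable (lebesgue_on {a..b})"
proof -
  have m: "\<psi> \<in> borel_measurable (lebesgue_on {a..b})"
    using measurable_restrict_mono[OF assms] by auto
  have "(\<lambda>s. cis (\<psi> s)) \<in> borel_measurable (lebesgue_on {a..b})"
    by (rule borel_measurable_continuous_on[OF _ m]) (intro continuous_intros)
  then show ?thesis by measurable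
qed

lemma integrable_cis_comp:
  fixes \<psi> :: "real \<Rightarrow> real" and c :: complex
  assumes "\<psi> \<in> borel_measurable (lebesgue_on {a..})"
  shows "(\<lambda>s. c * cis (\<psi> s)) integrable_on {a..b}"
  by (rule measurable_bounded_by_integrable_imp_integrable[OF measurable_cis_comp[OF assms],
        where g = "\<lambda>_. cmod c"]) (auto simp: norm_mult)

lemma norm_integral_cis_comp_le:
  fixes \<psi> :: "real \<Rightarrow> real"
  assumes "\<psi> \<in> borel_measurable (lebesgue_on {a..})" and "a \<le> b" and "0 \<le> \<alpha>"
  shows "cmod (integral {a..b} (\<lambda>s. of_real \<alpha> * cis (\<psi> s))) \<le> \<alpha> * (b - a)"
proof -
  have "cmod (integral {a..b} (\<lambda>s. of_real \<alpha> * cis (\<psi> s))) \<le> integral {a..b} (\<lambda>_. \<alpha>)"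
    by (rule integral_norm_bound_integral) (auto simp: integrable_cis_comp[OF assms(1)] norm_mult assms(3))
  then show ?thesis using assms(2) by (simp add: mult.commute)
qed

definition rel_pos :: "real \<Rightarrow> real \<Rightarrow> real \<Rightarrow> real \<Rightarrow> real \<Rightarrow> (real \<Rightarrow> real) \<Rightarrow> real \<Rightarrow> complex" where
  "rel_pos \<alpha> t2 x2 yO2 yT2 \<psi> t = Complex (obs_x \<alpha> t2 x2 \<psi> t) (obs_y \<alpha> t2 yO2 \<psi> t - target_y t2 yT2 t)"

lemma escape_time_eq_Inf_rel_pos:
  assumes "0 \<le> R"
  shows "escape_time \<alpha> R t2 x2 yO2 yT2 \<psi> = Inf {t. t2 \<le> t \<and> R < cmod (rel_pos \<alpha> t2 x2 yO2 yT2 \<psi> t)}"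
proof -
  have "R < sqrt s \<longleftrightarrow> R\<^sup>2 < s" for s
    using assms by (metis abs_of_nonneg real_sqrt_abs real_sqrt_less_iff)
  then show ?thesis unfolding escape_time_def rel_pos_def cmod_def by simp
qed

lemma rel_pos_eq:
  fixes \<psi> :: "real \<Rightarrow> real"
  assumes "\<psi> \<in> borel_measurable (lebesgue_on {t2..})"
  shows "rel_pos \<alpha> t2 x2 yO2 yT2 \<psi> t
    = Complex x2 (yO2 - yT2) - \<i> * of_real (t - t2) + integral {t2..t} (\<lambda>s. of_real \<alpha> * cis (\<psi> s))"
proof -
  have int: "(\<lambda>s. of_real \<alpha> * cis (\<psi> s)) integrable_on {t2..t}"
    by (rule integrable_cis_comp[OF assms])
  show ?thesis
    using integral_linear[OF int bounded_linear_Re] integral_linear[OF int bounded_linear_Im]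
    by (simp add: complex_eq_iff rel_pos_def obs_x_def obs_y_def target_y_def o_def)
qed

lemma inside_disk_time_bound:
  fixes p d :: complex and R \<alpha> \<tau> :: real
  assumes p: "cmod p = R" and d: "cmod d \<le> \<alpha> * \<tau>"
    and inside: "cmod (p - \<i> * of_real \<tau> + d) \<le> R" and "0 \<le> \<alpha>" "0 \<le> \<tau>"
  shows "\<tau>\<^sup>2 * (1 - \<alpha>\<^sup>2) \<le> 2 * \<tau> * (\<alpha> * R + Im p)"
proof -
  have "cmod (p - \<i> * of_real \<tau>) \<le> R + \<alpha> * \<tau>"
    using norm_triangle_ineq4[of "p - \<i> * of_real \<tau> + d" d] inside d by simp
  then have "(cmod (p - \<i> * of_real \<tau>))\<^sup>2 \<le> (R + \<alpha> * \<tau>)\<^sup>2"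
    by (rule power_mono) simp
  moreover have "(cmod (p - \<i> * of_real \<tau>))\<^sup>2 = (Re p)\<^sup>2 + (Im p - \<tau>)\<^sup>2"
    by (simp add: cmod_power2)
  moreover have "\<dots> = R\<^sup>2 - 2 * \<tau> * Im p + \<tau>\<^sup>2"
    using cmod_power2[of p] p by (simp add: power2_diff)
  ultimately show ?thesis by (simp add: power2_sum power_mult_distrib algebra_simps)
qed

definition max_observation_time :: "real \<Rightarrow> real \<Rightarrow> real \<Rightarrow> real" where
  "max_observation_time \<alpha> R lam = max 0 (2 * R * (\<alpha> + cos lam) / (1 - \<alpha>\<^sup>2))"

lemma norm_Complex_sin_cos:
  assumes "0 \<le> R"
  shows "cmod (Complex (R * sin lam) (R * cos lam)) = R"
  using assms by (simp add: cmod_def power_mult_distrib flip: distrib_left)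

lemma rel_pos_outside_after_max_observation_time:
  fixes \<psi> :: "real \<Rightarrow> real"
  assumes meas: "\<psi> \<in> borel_measurable (lebesgue_on {t2..})"
    and "0 \<le> \<alpha>" "\<alpha> < 1" "0 \<le> R" "x2 = R * sin lam" "yO2 - yT2 = R * cos lam"
    and after: "t2 + max_observation_time \<alpha> R lam < t"
  shows "R < cmod (rel_pos \<alpha> t2 x2 yO2 yT2 \<psi> t)"
proof (rule ccontr)
  define \<tau> where "\<tau> = t - t2"
  assume "\<not> R < cmod (rel_pos \<alpha> t2 x2 yO2 yT2 \<psi> t)"
  then have "cmod (Complex (R * sin lam) (R * cos lam) - \<i> * of_real \<tau>
      + integral {t2..t} (\<lambda>s. of_real \<alpha> * cis (\<psi> s))) \<le> R"
    using assms unfolding rel_pos_eq[OF meas] \<tau>_def by simp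
  moreover have "cmod (integral {t2..t} (\<lambda>s. of_real \<alpha> * cis (\<psi> s))) \<le> \<alpha> * \<tau>"
    using norm_integral_cis_comp_le[OF meas, of t \<alpha>] after assms(2)
    unfolding \<tau>_def max_observation_time_def by simp
  moreover have \<tau>: "0 < \<tau>" "max_observation_time \<alpha> R lam < \<tau>"
    using after unfolding \<tau>_def max_observation_time_def by auto
  ultimately have "\<tau>\<^sup>2 * (1 - \<alpha>\<^sup>2) \<le> 2 * \<tau> * (\<alpha> * R + R * cos lam)"
    using inside_disk_time_bound[OF norm_Complex_sin_cos] assms by fastforce
  then have "\<tau> * (\<tau> * (1 - \<alpha>\<^sup>2)) \<le> \<tau> * (2 * R * (\<alpha> + cos lam))"
    by (simp add: power2_eq_square algebra_simps)
  then have "\<tau> * (1 - \<alpha>\<^sup>2) \<le> 2 * R * (\<alpha> + cos lam)"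
    using \<open>0 < \<tau>\<close> by (rule mult_left_le_imp_le)
  moreover have "0 < 1 - \<alpha>\<^sup>2"
    using assms by (simp add: abs_square_less_1)
  ultimately have "\<tau> \<le> 2 * R * (\<alpha> + cos lam) / (1 - \<alpha>\<^sup>2)"
    by (metis pos_le_divide_eq)
  then show False
    using \<tau> by (simp add: max_observation_time_def)
qed

lemma escape_time_le_max_observation_time:
  fixes \<psi> :: "real \<Rightarrow> real"
  assumes meas: "\<psi> \<in> borel_measurable (lebesgue_on {t2..})"
    and "0 \<le> \<alpha>" "\<alpha> < 1" "0 \<le> R" "x2 = R * sin lam" "yO2 - yT2 = R * cos lam"
  shows "escape_time \<alpha> R t2 x2 yO2 yT2 \<psi> \<le> t2 + max_observation_time \<alpha> R lam"
proof -
  define S where "S = {t. t2 \<le> t \<and> R < cmod (rel_pos \<alpha> t2 x2 yO2 yT2 \<psi> t)}"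
  let ?T = "t2 + max_observation_time \<alpha> R lam"
  have "{?T<..} \<subseteq> S"
    using rel_pos_outside_after_max_observation_time[OF assms]
    by (auto simp: S_def max_observation_time_def)
  moreover have "bdd_below S"
    by (rule bdd_belowI[of _ t2]) (simp add: S_def)
  ultimately have "Inf S \<le> Inf {?T<..}"
    by (intro cInf_superset_mono) auto
  then show ?thesis
    using escape_time_eq_Inf_rel_pos[OF \<open>0 \<le> R\<close>] by (simp add: S_def)
qed

lemma cis_arccos_Re:
  assumes "cmod z = 1" and "0 \<le> Im z"
  shows "cis (arccos (Re z)) = z"
proof -
  have "\<bar>Re z\<bar> \<le> 1"
    using abs_Re_le_cmod[of z] assms(1) by simp
  moreover have "1 - (Re z)\<^sup>2 = (Im z)\<^sup>2"
    using cmod_power2[of z] assms(1) by simp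
  ultimately show ?thesis
    using assms(2) by (simp add: complex_eq_iff cos_arccos_abs sin_arccos_abs)
qed

definition optimal_heading :: "real \<Rightarrow> real \<Rightarrow> real" where
  "optimal_heading \<alpha> lam = arccos ((\<alpha>\<^sup>2 - 1) * sin lam / (\<alpha>\<^sup>2 + 2 * \<alpha> * cos lam + 1))"

lemma R_cos_less_exit_time:
  fixes \<alpha> R T lam :: real
  assumes "0 < \<alpha>" "\<alpha> < 1" "0 < R"
    and T: "(1 - \<alpha>\<^sup>2) * T = 2 * R * (\<alpha> + cos lam)" "0 < T"
  shows "R * cos lam < T"
proof -
  have "0 < 1 - \<alpha>\<^sup>2"
    using assms by (simp add: abs_square_less_1)
  have "0 < 2 * R * (\<alpha> + cos lam)"
    using T \<open>0 < 1 - \<alpha>\<^sup>2\<close> by (metis mult_pos_pos)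
  then have "0 < \<alpha> + cos lam"
    using assms(3) by (simp add: zero_less_mult_iff)
  then have "0 < (\<alpha> + cos lam) * (1 + \<alpha>\<^sup>2)"
    by (simp add: add_pos_nonneg)
  moreover have "0 < \<alpha> * (1 - \<alpha>\<^sup>2)"
    using \<open>0 < \<alpha>\<close> \<open>0 < 1 - \<alpha>\<^sup>2\<close> by simp
  ultimately have "0 < \<alpha> * (1 - \<alpha>\<^sup>2) + (\<alpha> + cos lam) * (1 + \<alpha>\<^sup>2)"
    by simp
  moreover have "(1 - \<alpha>\<^sup>2) * (T - R * cos lam)
      = R * (\<alpha> * (1 - \<alpha>\<^sup>2) + (\<alpha> + cos lam) * (1 + \<alpha>\<^sup>2))"
    using T(1) by algebra
  ultimately have "0 < (1 - \<alpha>\<^sup>2) * (T - R * cos lam)"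
    using assms(3) by simp
  then show ?thesis
    using \<open>0 < 1 - \<alpha>\<^sup>2\<close> by (simp add: zero_less_mult_iff)
qed

lemma optimal_heading_aims_at_exit_point:
  assumes "0 < \<alpha>" "\<alpha> < 1" "0 < R"
    and T: "(1 - \<alpha>\<^sup>2) * T = 2 * R * (\<alpha> + cos lam)" "0 < T"
  defines "w \<equiv> Complex (R * sin lam) (R * cos lam - T)"
  shows "cmod w = R + \<alpha> * T" and "cis (optimal_heading \<alpha> lam) = - w / of_real (cmod w)"
proof -
  have "(cmod w)\<^sup>2 = (R + \<alpha> * T)\<^sup>2 + T * ((1 - \<alpha>\<^sup>2) * T - 2 * R * (\<alpha> + cos lam))"
    unfolding w_def cmod_power2 complex.sel using sin_cos_squared_add[of lam] by algebra
  then show norm_w: "cmod w = R + \<alpha> * T"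
    using T assms(1,3) by (simp add: power2_eq_iff_nonneg)
  let ?D = "\<alpha>\<^sup>2 + 2 * \<alpha> * cos lam + 1"
  have D: "(1 - \<alpha>\<^sup>2) * (R + \<alpha> * T) = R * ?D"
    using T(1) by algebra
  have "0 < 1 - \<alpha>\<^sup>2" "0 < R + \<alpha> * T"
    using assms by (simp_all add: abs_square_less_1 add_pos_pos)
  then have "?D \<noteq> 0"
    using D by force
  moreover have "- R * sin lam * ?D = (\<alpha>\<^sup>2 - 1) * sin lam * (R + \<alpha> * T)"
    using D by algebra
  ultimately have Re_dir: "- R * sin lam / (R + \<alpha> * T) = (\<alpha>\<^sup>2 - 1) * sin lam / ?D"
    using \<open>0 < R + \<alpha> * T\<close> by (intro frac_eq_eq[THEN iffD2]) auto
  have "Im w \<le> 0" \<comment> \<open>arccos only yields headings with nonnegative sine\<close>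
    using R_cos_less_exit_time[OF assms(1-3) T] by (simp add: w_def)
  then have "cis (arccos (Re (- w / of_real (cmod w)))) = - w / of_real (cmod w)"
    using \<open>0 < R + \<alpha> * T\<close> unfolding norm_w[symmetric]
    by (intro cis_arccos_Re) (auto simp: norm_divide divide_nonpos_pos)
  then show "cis (optimal_heading \<alpha> lam) = - w / of_real (cmod w)"
    using Re_dir norm_w by (simp add: optimal_heading_def w_def)
qed

lemma rel_pos_optimal_heading_inside:
  assumes "0 < \<alpha>" "\<alpha> < 1" "0 < R" "x2 = R * sin lam" "yO2 - yT2 = R * cos lam"
    and "t2 \<le> t" "t \<le> t2 + max_observation_time \<alpha> R lam"
  shows "cmod (rel_pos \<alpha> t2 x2 yO2 yT2 (\<lambda>_. optimal_heading \<alpha> lam) t) \<le> R"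
proof -
  define T where "T = max_observation_time \<alpha> R lam"
  define p where "p = Complex (R * sin lam) (R * cos lam)"
  define v where "v = of_real \<alpha> * cis (optimal_heading \<alpha> lam) - \<i>"
  have pos: "rel_pos \<alpha> t2 x2 yO2 yT2 (\<lambda>_. optimal_heading \<alpha> lam) t = p + of_real (t - t2) * v"
    using assms by (simp add: rel_pos_eq p_def v_def algebra_simps scaleR_conv_of_real)
  have p: "p \<in> cball 0 R"
    using norm_Complex_sin_cos[of R lam] assms(3) by (simp add: p_def)
  show ?thesis
  proof (cases "T = 0")
    case True
    then show ?thesis
      using assms p unfolding pos T_def by simp
  next
    case False
    then have "0 < T" and T: "(1 - \<alpha>\<^sup>2) * T = 2 * R * (\<alpha> + cos lam)"
      using assms by (auto simp: T_def max_observation_time_def abs_square_less_1 max_def split: if_splits)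
    define w where "w = Complex (R * sin lam) (R * cos lam - T)"
    note exit = optimal_heading_aims_at_exit_point[OF assms(1-3) T \<open>0 < T\<close>, folded w_def]
    have "0 < cmod w"
      using exit(1) \<open>0 < R\<close> \<open>0 < \<alpha>\<close> \<open>0 < T\<close> by (simp add: add_pos_pos)
    have "p + of_real T * v = w + of_real (\<alpha> * T) * cis (optimal_heading \<alpha> lam)"
      by (simp add: p_def v_def w_def complex_eq_iff algebra_simps)
    also have "\<dots> = of_real (R / cmod w) * w"
      using \<open>0 < cmod w\<close> unfolding exit(2)
      by (simp add: field_simps) (simp add: exit(1) algebra_simps)
    finally have "p + of_real T * v \<in> cball 0 R"
      using \<open>0 < cmod w\<close> \<open>0 < R\<close> by (simp add: norm_mult norm_divide)
    define u where "u = (t - t2) / T"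
    have "0 \<le> u" "u \<le> 1" "u * T = t - t2"
      using assms(6,7) \<open>0 < T\<close> unfolding u_def T_def[symmetric] by auto
    with p have "(1 - u) *\<^sub>R p + u *\<^sub>R (p + of_real T * v) \<in> cball 0 R"
      using \<open>p + of_real T * v \<in> cball 0 R\<close> by (intro convexD[OF convex_cball]) auto
    moreover have "(1 - u) *\<^sub>R p + u *\<^sub>R (p + of_real T * v) = p + of_real (u * T) * v"
      by (simp add: scaleR_conv_of_real algebra_simps)
    ultimately show ?thesis
      unfolding pos \<open>u * T = t - t2\<close> by simp
  qed
qed

lemma max_observation_time_le_escape_time_optimal_heading:
  assumes "0 < \<alpha>" "\<alpha> < 1" "0 < R" "x2 = R * sin lam" "yO2 - yT2 = R * cos lam"
  shows "t2 + max_observation_time \<alpha> R lam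
    \<le> escape_time \<alpha> R t2 x2 yO2 yT2 (\<lambda>_. optimal_heading \<alpha> lam)"
proof -
  define S where "S = {t. t2 \<le> t \<and> R < cmod (rel_pos \<alpha> t2 x2 yO2 yT2 (\<lambda>_. optimal_heading \<alpha> lam) t)}"
  let ?T = "t2 + max_observation_time \<alpha> R lam"
  have "?T + 1 \<in> S"
    using rel_pos_outside_after_max_observation_time[of "\<lambda>_. optimal_heading \<alpha> lam" t2 \<alpha> R]
      assms by (simp add: S_def max_observation_time_def)
  moreover have "?T \<le> t" if "t \<in> S" for t
    using that rel_pos_optimal_heading_inside[OF assms, of t2 t] by (force simp: S_def)
  ultimately have "?T \<le> Inf S"
    by (intro cInf_greatest) auto
  then show ?thesis
    using escape_time_eq_Inf_rel_pos assms(3) by (simp add: S_def)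
qed

theorem lemma1:
  fixes \<alpha> R t2 x2 yO2 yT2 lam :: real
  assumes "0 < \<alpha>" and "\<alpha> < 1" and "0 < R"
    and "lam \<in> {-pi..pi}"
    and "x2 = R * sin lam" and "yO2 - yT2 = R * cos lam"
  shows "\<forall>\<psi>. \<psi> \<in> borel_measurable (lebesgue_on {t2..}) \<longrightarrow>
           escape_time \<alpha> R t2 x2 yO2 yT2 \<psi> - t2
             \<le> escape_time \<alpha> R t2 x2 yO2 yT2
                  (\<lambda>_. arccos ((\<alpha>\<^sup>2 - 1) * sin lam / (\<alpha>\<^sup>2 + 2 * \<alpha> * cos lam + 1))) - t2"
proof (intro allI impI, fold optimal_heading_def)
  fix \<psi> :: "real \<Rightarrow> real"
  assume "\<psi> \<in> borel_measurable (lebesgue_on {t2..})"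
  then have "escape_time \<alpha> R t2 x2 yO2 yT2 \<psi> \<le> t2 + max_observation_time \<alpha> R lam"
    by (rule escape_time_le_max_observation_time) (use assms in auto)
  also have "\<dots> \<le> escape_time \<alpha> R t2 x2 yO2 yT2 (\<lambda>_. optimal_heading \<alpha> lam)"
    by (rule max_observation_time_le_escape_time_optimal_heading) (use assms in auto)
  finally show "escape_time \<alpha> R t2 x2 yO2 yT2 \<psi> - t2
      \<le> escape_time \<alpha> R t2 x2 yO2 yT2 (\<lambda>_. optimal_heading \<alpha> lam) - t2"
    by simp
qed

end
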